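(* Let $n\ge 2$ and let $U$ be the transition matrix of the Grover walk on the complete graph $K_n$. Then there is a real scalar $t$ such that $U^2=\exp\big(t\,S(\mathrm{LD}(K_n))\big)$.
   Context: For a $k$-regular graph $X$, each edge $\{a,b\}$ is replaced by arcs $(a,b)$ and $(b,a)$. The line digraph $\mathrm{LD}(X)$ has the arcs as vertices, with an arc from $(a,b)$ to $(c,d)$ iff $b=c$; $A(\mathrm{LD}(X))$ is its $01$-adjacency matrix. $R$ is the permutation matrix on arcs mapping $(a,b)$ to $(b,a)$. The transition matrix of the Grover walk is $U=\frac{2}{k}A(\mathrm{LD}(X))-R$ (here $k=n-1$). For a digraph $Z$ with $01$-adjacency matrix $A(Z)$, its skew-adjacency matrix is $S(Z)=A(Z)-A(Z)^T$. *)

theory Defs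
  imports Complex_Main
begin

text \<open>Matrices indexed by a finite set I of indices are represented as functions
  'i \<Rightarrow> 'i \<Rightarrow> real which vanish outside I \<times> I.\<close>

definition mmult :: "'i set \<Rightarrow> ('i \<Rightarrow> 'i \<Rightarrow> real) \<Rightarrow> ('i \<Rightarrow> 'i \<Rightarrow> real) \<Rightarrow> 'i \<Rightarrow> 'i \<Rightarrow> real" where
  "mmult I A B = (\<lambda>x y. \<Sum>z\<in>I. A x z * B z y)"

definition mident :: "'i set \<Rightarrow> 'i \<Rightarrow> 'i \<Rightarrow> real" where
  "mident I = (\<lambda>x y. if x \<in> I \<and> x = y then 1 else 0)"

fun mpow :: "'i set \<Rightarrow> ('i \<Rightarrow> 'i \<Rightarrow> real) \<Rightarrow> nat \<Rightarrow> 'i \<Rightarrow> 'i \<Rightarrow> real" where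
  "mpow I A 0 = mident I"
| "mpow I A (Suc k) = mmult I (mpow I A k) A"

definition mexp :: "'i set \<Rightarrow> ('i \<Rightarrow> 'i \<Rightarrow> real) \<Rightarrow> 'i \<Rightarrow> 'i \<Rightarrow> real" where
  "mexp I A = (\<lambda>x y. (\<Sum>k. mpow I A k x y / fact k))"

text \<open>A graph is given by a vertex set V and a symmetric edge relation E;
  arcs are the ordered pairs (a,b) with {a,b} an edge.\<close>
definition arcs :: "'a set \<Rightarrow> ('a \<Rightarrow> 'a \<Rightarrow> bool) \<Rightarrow> ('a \<times> 'a) set" where
  "arcs V E = {(a,b). a \<in> V \<and> b \<in> V \<and> E a b}"

definition LD_adj :: "'a set \<Rightarrow> ('a \<Rightarrow> 'a \<Rightarrow> bool) \<Rightarrow> ('a \<times> 'a) \<Rightarrow> ('a \<times> 'a) \<Rightarrow> real" where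
  "LD_adj V E = (\<lambda>x y. if x \<in> arcs V E \<and> y \<in> arcs V E \<and> snd x = fst y then 1 else 0)"

definition arc_rev :: "'a set \<Rightarrow> ('a \<Rightarrow> 'a \<Rightarrow> bool) \<Rightarrow> ('a \<times> 'a) \<Rightarrow> ('a \<times> 'a) \<Rightarrow> real" where
  "arc_rev V E = (\<lambda>x y. if x \<in> arcs V E \<and> y \<in> arcs V E \<and> y = (snd x, fst x) then 1 else 0)"

text \<open>Grover walk transition matrix U = (2/k) A(LD(X)) - R for a k-regular graph.\<close>
definition grover :: "real \<Rightarrow> 'a set \<Rightarrow> ('a \<Rightarrow> 'a \<Rightarrow> bool) \<Rightarrow> ('a \<times> 'a) \<Rightarrow> ('a \<times> 'a) \<Rightarrow> real" where
  "grover k V E = (\<lambda>x y. 2 / k * LD_adj V E x y - arc_rev V E x y)"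

definition skew :: "('i \<Rightarrow> 'i \<Rightarrow> real) \<Rightarrow> 'i \<Rightarrow> 'i \<Rightarrow> real" where
  "skew A = (\<lambda>x y. A x y - A y x)"

definition Kn_V :: "nat \<Rightarrow> nat set" where "Kn_V n = {0..<n}"
definition Kn_E :: "nat \<Rightarrow> nat \<Rightarrow> bool" where "Kn_E a b = (a \<noteq> b)"

end

theory Submission
  imports Defs
begin

text \<open>Write \<open>k = n - 1\<close> and let \<open>S\<close> be the skew-adjacency matrix of \<open>LD(K\<^sub>n)\<close>.
  Counting paths of length two and three between arcs gives \<open>S\<^sup>3 = -(k\<^sup>2 - 1) S\<close> and
  \<open>U\<^sup>2 = I - (2/k\<^sup>2) S + (2/k\<^sup>2) S\<^sup>2\<close>. As for rotations in three dimensions, a matrix with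
  \<open>S\<^sup>3 = -s\<^sup>2 S\<close> satisfies Rodrigues' formula
  \<open>exp ((\<theta>/s) S) = I + (sin \<theta> / s) S + ((1 - cos \<theta>) / s\<^sup>2) S\<^sup>2\<close>. With \<open>s\<^sup>2 = k\<^sup>2 - 1\<close>,
  the coefficients of \<open>U\<^sup>2\<close> are matched by the angle of the point
  \<open>((1 - s\<^sup>2)/(1 + s\<^sup>2), -2s/(1 + s\<^sup>2))\<close> of the unit circle. For \<open>n = 2\<close> the matrix \<open>S\<close>
  vanishes and \<open>U\<^sup>2 = I\<close>.\<close>

definition vanishes_outside :: "'i set \<Rightarrow> ('i \<Rightarrow> 'i \<Rightarrow> real) \<Rightarrow> bool" where
  "vanishes_outside I A \<longleftrightarrow> (\<forall>x y. x \<notin> I \<or> y \<notin> I \<longrightarrow> A x y = 0)"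

lemma vanishes_outside_mident: "vanishes_outside I (mident I)"
  by (simp add: vanishes_outside_def mident_def)

lemma vanishes_outside_mmult:
  "vanishes_outside I A \<Longrightarrow> vanishes_outside I B \<Longrightarrow> vanishes_outside I (mmult I A B)"
  by (auto simp: vanishes_outside_def mmult_def)

lemma matrix_eqI:
  assumes "vanishes_outside I A" "vanishes_outside I B"
    and "\<And>x y. x \<in> I \<Longrightarrow> y \<in> I \<Longrightarrow> A x y = B x y"
  shows "A = B"
  using assms unfolding vanishes_outside_def by (metis ext)

lemma mmult_assoc:
  assumes "finite I"
  shows "mmult I (mmult I A B) C = mmult I A (mmult I B C)"
  unfolding mmult_def
  by (auto simp: sum_distrib_left sum_distrib_right mult.assoc intro!: ext sum.swap)

lemma mmult_mident_left:
  assumes "finite I" "vanishes_outside I A"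
  shows "mmult I (mident I) A = A"
proof (intro ext)
  fix x y
  show "mmult I (mident I) A x y = A x y"
  proof (cases "x \<in> I")
    case True
    have "mmult I (mident I) A x y = (\<Sum>z\<in>I. if x = z then A z y else 0)"
      unfolding mmult_def mident_def using True by (intro sum.cong) auto
    also have "\<dots> = A x y" using True assms(1) by simp
    finally show ?thesis .
  qed (use assms(2) in \<open>simp add: mmult_def mident_def vanishes_outside_def\<close>)
qed

lemma mexp_zero: "mexp I (\<lambda>x y. 0) = mident I"
proof (intro ext)
  fix x y
  have "mpow I (\<lambda>x y. 0) k x y / fact k = (if k = 0 then mident I x y else 0)" for k
    by (cases k) (simp_all add: mmult_def)
  then show "mexp I (\<lambda>x y. 0) x y = mident I x y"
    unfolding mexp_def using sums_single[of 0 "\<lambda>_. mident I x y"] by (simp add: sums_iff)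
qed

lemma mpow_rodrigues:
  fixes S :: "'i \<Rightarrow> 'i \<Rightarrow> real" and s \<theta> :: real
  assumes "finite I" "vanishes_outside I S"
    and cube: "mmult I (mmult I S S) S = (\<lambda>x y. - (s\<^sup>2) * S x y)"
    and "s > 0"
  shows "mpow I (\<lambda>x y. \<theta> / s * S x y) k x y = fact k * (of_bool (k = 0) * mident I x y
           + sin_coeff k * \<theta> ^ k / s * S x y
           + (of_bool (k = 0) - cos_coeff k) * \<theta> ^ k / s\<^sup>2 * mmult I S S x y)"
proof (induction k arbitrary: x y)
  case 0
  then show ?case by (simp add: cos_coeff_def sin_coeff_def)
next
  case (Suc k)
  define c\<^sub>I c\<^sub>S c\<^sub>S\<^sub>S :: real where "c\<^sub>I = of_bool (k = 0)" and "c\<^sub>S = sin_coeff k * \<theta> ^ k / s"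
    and "c\<^sub>S\<^sub>S = (of_bool (k = 0) - cos_coeff k) * \<theta> ^ k / s\<^sup>2"
  have "mpow I (\<lambda>x y. \<theta> / s * S x y) (Suc k) x y
      = (\<Sum>z\<in>I. fact k * (c\<^sub>I * mident I x z + c\<^sub>S * S x z + c\<^sub>S\<^sub>S * mmult I S S x z) * (\<theta> / s * S z y))"
    by (simp only: mpow.simps mmult_def Suc.IH c\<^sub>I_def c\<^sub>S_def c\<^sub>S\<^sub>S_def)
  also have "\<dots> = fact k * \<theta> / s * (c\<^sub>I * mmult I (mident I) S x y + c\<^sub>S * mmult I S S x y
                            + c\<^sub>S\<^sub>S * mmult I (mmult I S S) S x y)"
    by (simp add: mmult_def sum.distrib sum_distrib_left algebra_simps)
  also have "\<dots> = fact k * \<theta> / s * ((c\<^sub>I - s\<^sup>2 * c\<^sub>S\<^sub>S) * S x y + c\<^sub>S * mmult I S S x y)"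
    using assms(1,2) by (simp add: mmult_mident_left cube algebra_simps)
  also have "\<dots> = fact (Suc k) * (sin_coeff (Suc k) * \<theta> ^ Suc k / s * S x y
           + (- cos_coeff (Suc k)) * \<theta> ^ Suc k / s\<^sup>2 * mmult I S S x y)"
  proof -
    have "c\<^sub>I - s\<^sup>2 * c\<^sub>S\<^sub>S = cos_coeff k * \<theta> ^ k"
      using \<open>s > 0\<close> by (cases k) (simp_all add: c\<^sub>I_def c\<^sub>S\<^sub>S_def field_simps)
    then show ?thesis
      using \<open>s > 0\<close> by (simp add: c\<^sub>S_def sin_coeff_Suc cos_coeff_Suc field_simps power2_eq_square
          del: of_nat_Suc)
  qed
  finally show ?case by simp
qed

lemma mexp_rodrigues:
  fixes S :: "'i \<Rightarrow> 'i \<Rightarrow> real" and s \<theta> :: real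
  assumes "finite I" "vanishes_outside I S"
    and "mmult I (mmult I S S) S = (\<lambda>x y. - (s\<^sup>2) * S x y)"
    and "s > 0"
  shows "mexp I (\<lambda>x y. \<theta> / s * S x y)
           = (\<lambda>x y. mident I x y + sin \<theta> / s * S x y + (1 - cos \<theta>) / s\<^sup>2 * mmult I S S x y)"
proof (intro ext)
  fix x y
  have "(\<lambda>k. of_bool (k = 0) * mident I x y + sin_coeff k * \<theta> ^ k * (S x y / s)
            + (of_bool (k = 0) - cos_coeff k * \<theta> ^ k) * (mmult I S S x y / s\<^sup>2))
        sums (1 * mident I x y + sin \<theta> * (S x y / s) + (1 - cos \<theta>) * (mmult I S S x y / s\<^sup>2))"
    using sums_single[of 0 "\<lambda>_. 1::real"] sin_converges[of \<theta>] cos_converges[of \<theta>]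
    by (intro sums_add sums_mult2 sums_diff) (simp_all add: of_bool_def)
  moreover have "mpow I (\<lambda>x y. \<theta> / s * S x y) k x y / fact k
      = of_bool (k = 0) * mident I x y + sin_coeff k * \<theta> ^ k * (S x y / s)
        + (of_bool (k = 0) - cos_coeff k * \<theta> ^ k) * (mmult I S S x y / s\<^sup>2)" for k
    by (subst mpow_rodrigues[OF assms]) (cases "k = 0"; simp add: field_simps)
  ultimately show "mexp I (\<lambda>x y. \<theta> / s * S x y) x y
      = mident I x y + sin \<theta> / s * S x y + (1 - cos \<theta>) / s\<^sup>2 * mmult I S S x y"
    unfolding mexp_def by (simp add: sums_iff)
qed

lemma ex_angle_rational_circle_point:
  fixes s :: real
  shows "\<exists>\<theta>. cos \<theta> = (1 - s\<^sup>2) / (1 + s\<^sup>2) \<and> sin \<theta> = - 2 * s / (1 + s\<^sup>2)"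
proof -
  have pos: "1 + s\<^sup>2 > 0" by (simp add: add_pos_nonneg)
  have "((1 - s\<^sup>2) / (1 + s\<^sup>2))\<^sup>2 + (- 2 * s / (1 + s\<^sup>2))\<^sup>2 = 1"
    using pos by (simp add: field_simps) algebra
  then show ?thesis using sincos_total_2pi_le by metis
qed

lemma ex_mexp_eq_cayley_quadratic:
  fixes S :: "'i \<Rightarrow> 'i \<Rightarrow> real" and k :: real
  assumes "finite I" "vanishes_outside I S"
    and cube: "mmult I (mmult I S S) S = (\<lambda>x y. - (k\<^sup>2 - 1) * S x y)"
    and "k > 1"
  shows "\<exists>t. (\<lambda>x y. mident I x y - 2 / k\<^sup>2 * S x y + 2 / k\<^sup>2 * mmult I S S x y)
              = mexp I (\<lambda>x y. t * S x y)"
proof -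
  define s where "s = sqrt (k\<^sup>2 - 1)"
  have "k\<^sup>2 > 1" using \<open>k > 1\<close> by (simp add: one_less_power)
  then have "s > 0" and k_sq: "k\<^sup>2 = 1 + s\<^sup>2" by (simp_all add: s_def)
  obtain \<theta> where cos: "cos \<theta> = (1 - s\<^sup>2) / (1 + s\<^sup>2)" and sin: "sin \<theta> = - 2 * s / (1 + s\<^sup>2)"
    using ex_angle_rational_circle_point by blast
  have "1 + s\<^sup>2 > 0" by (simp add: add_pos_nonneg)
  then have "1 - cos \<theta> = s\<^sup>2 * (2 / (1 + s\<^sup>2))" by (simp add: cos field_simps)
  then have "sin \<theta> / s = - (2 / k\<^sup>2)" and "(1 - cos \<theta>) / s\<^sup>2 = 2 / k\<^sup>2"
    using \<open>s > 0\<close> by (simp_all add: sin k_sq)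
  moreover have "mexp I (\<lambda>x y. \<theta> / s * S x y)
      = (\<lambda>x y. mident I x y + sin \<theta> / s * S x y + (1 - cos \<theta>) / s\<^sup>2 * mmult I S S x y)"
    by (intro mexp_rodrigues assms(1,2) \<open>s > 0\<close>) (simp add: cube k_sq)
  ultimately have "(\<lambda>x y. mident I x y - 2 / k\<^sup>2 * S x y + 2 / k\<^sup>2 * mmult I S S x y)
      = mexp I (\<lambda>x y. \<theta> / s * S x y)"
    by simp
  then show ?thesis ..
qed

abbreviation Kn_arcs :: "nat \<Rightarrow> (nat \<times> nat) set" where
  "Kn_arcs n \<equiv> arcs (Kn_V n) Kn_E"

abbreviation Kn_skew :: "nat \<Rightarrow> nat \<times> nat \<Rightarrow> nat \<times> nat \<Rightarrow> real" where
  "Kn_skew n \<equiv> skew (LD_adj (Kn_V n) Kn_E)"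

abbreviation Kn_grover :: "nat \<Rightarrow> nat \<times> nat \<Rightarrow> nat \<times> nat \<Rightarrow> real" where
  "Kn_grover n \<equiv> grover (real (n - 1)) (Kn_V n) Kn_E"

lemma mem_Kn_arcs: "(a, b) \<in> Kn_arcs n \<longleftrightarrow> a < n \<and> b < n \<and> a \<noteq> b"
  by (auto simp: arcs_def Kn_V_def Kn_E_def)

lemma finite_Kn_arcs: "finite (Kn_arcs n)"
proof (rule finite_subset)
  show "Kn_arcs n \<subseteq> {0..<n} \<times> {0..<n}" by (auto simp: arcs_def Kn_V_def)
qed simp

lemma sum_Kn_arcs_from:
  assumes "b < n"
  shows "(\<Sum>z\<in>Kn_arcs n. if fst z = b then G z else 0) = (\<Sum>w\<in>{0..<n} - {b}. G (b, w))"
proof -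
  have "{z \<in> Kn_arcs n. fst z = b} = (\<lambda>w. (b, w)) ` ({0..<n} - {b})"
    using assms by (auto simp: mem_Kn_arcs)
  then show ?thesis
    by (simp add: sum.inter_filter[symmetric] finite_Kn_arcs sum.reindex inj_on_def)
qed

lemma sum_Kn_arcs_into:
  assumes "a < n"
  shows "(\<Sum>z\<in>Kn_arcs n. if snd z = a then G z else 0) = (\<Sum>u\<in>{0..<n} - {a}. G (u, a))"
proof -
  have "{z \<in> Kn_arcs n. snd z = a} = (\<lambda>u. (u, a)) ` ({0..<n} - {a})"
    using assms by (auto simp: mem_Kn_arcs)
  then show ?thesis
    by (simp add: sum.inter_filter[symmetric] finite_Kn_arcs sum.reindex inj_on_def)
qed

lemma sum_affine_deltas:
  fixes b c d n :: nat and \<alpha> \<beta> \<gamma> :: real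
  assumes "b < n"
  shows "(\<Sum>w\<in>{0..<n} - {b}. \<alpha> + \<beta> * of_bool (w = c) + \<gamma> * of_bool (w = d))
    = \<alpha> * real (n - 1) + \<beta> * of_bool (c < n \<and> c \<noteq> b) + \<gamma> * of_bool (d < n \<and> d \<noteq> b)"
  using assms by (simp add: sum.distrib sum_distrib_left[symmetric] of_bool_def sum.delta)

lemma Kn_skew_eq:
  "Kn_skew n x y = (if x \<in> Kn_arcs n \<and> y \<in> Kn_arcs n
     then of_bool (snd x = fst y) - of_bool (snd y = fst x) else 0)"
  by (auto simp: skew_def LD_adj_def)

lemma vanishes_outside_Kn_skew: "vanishes_outside (Kn_arcs n) (Kn_skew n)"
  by (simp add: vanishes_outside_def Kn_skew_eq)

lemma mmult_Kn_skew_left: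
  assumes "(a, b) \<in> Kn_arcs n"
  shows "mmult (Kn_arcs n) (Kn_skew n) F (a, b) y
    = (\<Sum>w\<in>{0..<n} - {b}. F (b, w) y) - (\<Sum>u\<in>{0..<n} - {a}. F (u, a) y)"
proof -
  have "mmult (Kn_arcs n) (Kn_skew n) F (a, b) y
      = (\<Sum>z\<in>Kn_arcs n. (if fst z = b then F z y else 0) - (if snd z = a then F z y else 0))"
    unfolding mmult_def using assms by (intro sum.cong) (auto simp: Kn_skew_eq)
  then show ?thesis
    using assms by (simp add: sum_subtractf sum_Kn_arcs_from sum_Kn_arcs_into mem_Kn_arcs)
qed

lemma Kn_skew_sq_entry:
  assumes x: "(a, b) \<in> Kn_arcs n" and y: "(c, d) \<in> Kn_arcs n"
  shows "mmult (Kn_arcs n) (Kn_skew n) (Kn_skew n) (a, b) (c, d)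
    = of_bool (c \<noteq> b) - real (n - 1) * of_bool (d = b) - real (n - 1) * of_bool (a = c)
      + of_bool (d \<noteq> a)"
proof -
  from x y have arcs: "a < n" "b < n" "a \<noteq> b" "c < n" "d < n" "c \<noteq> d"
    by (auto simp: mem_Kn_arcs)
  have out: "(\<Sum>w\<in>{0..<n} - {b}. Kn_skew n (b, w) (c, d))
      = (\<Sum>w\<in>{0..<n} - {b}. - of_bool (d = b) + 1 * of_bool (w = c) + 0 * of_bool (w = d))"
    using arcs by (intro sum.cong) (auto simp: Kn_skew_eq mem_Kn_arcs)
  have into: "(\<Sum>u\<in>{0..<n} - {a}. Kn_skew n (u, a) (c, d))
      = (\<Sum>u\<in>{0..<n} - {a}. of_bool (a = c) + 0 * of_bool (u = c) + (- 1) * of_bool (u = d))"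
    using arcs by (intro sum.cong) (auto simp: Kn_skew_eq mem_Kn_arcs)
  show ?thesis
    using arcs by (simp only: mmult_Kn_skew_left[OF x] out into sum_affine_deltas) (auto simp: algebra_simps)
qed

lemma Kn_skew_cube:
  "mmult (Kn_arcs n) (mmult (Kn_arcs n) (Kn_skew n) (Kn_skew n)) (Kn_skew n)
    = (\<lambda>x y. - ((real (n - 1))\<^sup>2 - 1) * Kn_skew n x y)"
proof (rule matrix_eqI)
  show "vanishes_outside (Kn_arcs n) (\<lambda>x y. - ((real (n - 1))\<^sup>2 - 1) * Kn_skew n x y)"
    using vanishes_outside_Kn_skew by (simp add: vanishes_outside_def)
next
  fix x y assume "x \<in> Kn_arcs n" "y \<in> Kn_arcs n"
  then obtain a b c d where x: "x = (a, b)" "(a, b) \<in> Kn_arcs n" and y: "y = (c, d)" "(c, d) \<in> Kn_arcs n"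
    by (cases x, cases y) auto
  then have arcs: "a < n" "b < n" "a \<noteq> b" "c < n" "d < n" "c \<noteq> d"
    by (auto simp: mem_Kn_arcs)
  define k where "k = real (n - 1)"
  have out: "(\<Sum>w\<in>{0..<n} - {b}. mmult (Kn_arcs n) (Kn_skew n) (Kn_skew n) (b, w) (c, d))
      = (\<Sum>w\<in>{0..<n} - {b}. (1 - k * of_bool (b = c) + of_bool (d \<noteq> b))
           + (- 1) * of_bool (w = c) + (- k) * of_bool (w = d))"
    using arcs by (intro sum.cong) (auto simp: Kn_skew_sq_entry mem_Kn_arcs k_def)
  have into: "(\<Sum>u\<in>{0..<n} - {a}. mmult (Kn_arcs n) (Kn_skew n) (Kn_skew n) (u, a) (c, d))
      = (\<Sum>u\<in>{0..<n} - {a}. (of_bool (c \<noteq> a) - k * of_bool (d = a) + 1)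
           + (- k) * of_bool (u = c) + (- 1) * of_bool (u = d))"
    using arcs by (intro sum.cong) (auto simp: Kn_skew_sq_entry mem_Kn_arcs k_def)
  show "mmult (Kn_arcs n) (mmult (Kn_arcs n) (Kn_skew n) (Kn_skew n)) (Kn_skew n) x y
      = - ((real (n - 1))\<^sup>2 - 1) * Kn_skew n x y"
    using arcs unfolding x(1) y(1) mmult_assoc[OF finite_Kn_arcs]
    by (simp only: mmult_Kn_skew_left[OF x(2)] out into sum_affine_deltas flip: k_def)
      (auto simp: algebra_simps Kn_skew_eq mem_Kn_arcs power2_eq_square)
qed (intro vanishes_outside_mmult vanishes_outside_Kn_skew)+

lemma Kn_grover_eq:
  "grover k (Kn_V n) Kn_E x y = (if x \<in> Kn_arcs n \<and> y \<in> Kn_arcs n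
     then 2 / k * of_bool (snd x = fst y) - of_bool (y = (snd x, fst x)) else 0)"
  by (auto simp: grover_def LD_adj_def arc_rev_def)

lemma mmult_Kn_grover_left:
  assumes "(a, b) \<in> Kn_arcs n"
  shows "mmult (Kn_arcs n) (grover k (Kn_V n) Kn_E) F (a, b) y
    = 2 / k * (\<Sum>w\<in>{0..<n} - {b}. F (b, w) y) - F (b, a) y"
proof -
  have "(b, a) \<in> Kn_arcs n" using assms by (auto simp: mem_Kn_arcs)
  have "mmult (Kn_arcs n) (grover k (Kn_V n) Kn_E) F (a, b) y
      = (\<Sum>z\<in>Kn_arcs n. 2 / k * (if fst z = b then F z y else 0)
           - (if z = (b, a) then F z y else 0))"
    unfolding mmult_def using assms by (intro sum.cong) (auto simp: Kn_grover_eq left_diff_distrib)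
  then show ?thesis
    using assms \<open>(b, a) \<in> Kn_arcs n\<close>
    by (simp add: sum_subtractf sum_divide_distrib[symmetric] sum_distrib_left[symmetric] sum_Kn_arcs_from mem_Kn_arcs
        sum.delta[OF finite_Kn_arcs])
qed

lemma Kn_grover_sq:
  "mmult (Kn_arcs n) (Kn_grover n) (Kn_grover n)
    = (\<lambda>x y. mident (Kn_arcs n) x y - 2 / (real (n - 1))\<^sup>2 * Kn_skew n x y
             + 2 / (real (n - 1))\<^sup>2 * mmult (Kn_arcs n) (Kn_skew n) (Kn_skew n) x y)"
proof (rule matrix_eqI)
  show "vanishes_outside (Kn_arcs n) (mmult (Kn_arcs n) (Kn_grover n) (Kn_grover n))"
    by (intro vanishes_outside_mmult) (simp_all add: vanishes_outside_def Kn_grover_eq)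
  show "vanishes_outside (Kn_arcs n) (\<lambda>x y. mident (Kn_arcs n) x y - 2 / (real (n - 1))\<^sup>2 * Kn_skew n x y
      + 2 / (real (n - 1))\<^sup>2 * mmult (Kn_arcs n) (Kn_skew n) (Kn_skew n) x y)"
    using vanishes_outside_mident[of "Kn_arcs n"] vanishes_outside_Kn_skew[of n]
      vanishes_outside_mmult[OF vanishes_outside_Kn_skew vanishes_outside_Kn_skew, of n]
    by (simp add: vanishes_outside_def)
next
  fix x y assume "x \<in> Kn_arcs n" "y \<in> Kn_arcs n"
  then obtain a b c d where x: "x = (a, b)" "(a, b) \<in> Kn_arcs n" and y: "y = (c, d)" "(c, d) \<in> Kn_arcs n"
    by (cases x, cases y) auto
  then have arcs: "a < n" "b < n" "a \<noteq> b" "c < n" "d < n" "c \<noteq> d"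
    by (auto simp: mem_Kn_arcs)
  define k where "k = real (n - 1)"
  have "k > 0" "real n = k + 1" using arcs by (auto simp: k_def)
  have out: "(\<Sum>w\<in>{0..<n} - {b}. grover k (Kn_V n) Kn_E (b, w) (c, d))
      = (\<Sum>w\<in>{0..<n} - {b}. 0 + (2 / k - of_bool (d = b)) * of_bool (w = c) + 0 * of_bool (w = d))"
    using arcs by (intro sum.cong) (auto simp: Kn_grover_eq mem_Kn_arcs)
  show "mmult (Kn_arcs n) (Kn_grover n) (Kn_grover n) x y
      = mident (Kn_arcs n) x y - 2 / (real (n - 1))\<^sup>2 * Kn_skew n x y
        + 2 / (real (n - 1))\<^sup>2 * mmult (Kn_arcs n) (Kn_skew n) (Kn_skew n) x y"
    using arcs x(2) y(2) \<open>k > 0\<close> \<open>real n = k + 1\<close> unfolding x(1) y(1)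
    by (simp only: mmult_Kn_grover_left[OF x(2)] out sum_affine_deltas Kn_skew_sq_entry flip: k_def)
      (auto simp: Kn_grover_eq mident_def Kn_skew_eq mem_Kn_arcs field_simps power2_eq_square)
qed

lemma Kn_skew_two: "Kn_skew 2 = (\<lambda>x y. 0)"
  by (intro ext) (auto simp: Kn_skew_eq mem_Kn_arcs)

theorem corollary6p2:
  fixes n :: nat
  assumes "n \<ge> 2"
  shows "\<exists>t::real.
    mmult (arcs (Kn_V n) Kn_E) (grover (real (n - 1)) (Kn_V n) Kn_E) (grover (real (n - 1)) (Kn_V n) Kn_E)
    = mexp (arcs (Kn_V n) Kn_E) (\<lambda>x y. t * skew (LD_adj (Kn_V n) Kn_E) x y)"
proof (cases "n = 2")
  case True
  then have "mmult (Kn_arcs n) (Kn_grover n) (Kn_grover n) = mident (Kn_arcs n)"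
    unfolding Kn_grover_sq by (simp add: Kn_skew_two mmult_def)
  also have "\<dots> = mexp (Kn_arcs n) (\<lambda>x y. 0 * Kn_skew n x y)"
    by (simp add: mexp_zero)
  finally show ?thesis by blast
next
  case False
  then have "real (n - 1) > 1" using assms by simp
  then show ?thesis
    unfolding Kn_grover_sq
    by (intro ex_mexp_eq_cayley_quadratic finite_Kn_arcs vanishes_outside_Kn_skew Kn_skew_cube)
qed

end
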